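(* Let $\mathbb{F}$ be a field, $d\geq3$ and $V$ a vector space over $\mathbb{F}$ of dimension $d+1$. Let $E^*_0,\dots,E^*_d$ be a system of mutually orthogonal idempotents in $\mathrm{End}(V)$ and $A\in\mathrm{End}(V)$ with $E^*_iAE^*_j=0$ if $|i-j|>1$ and $E^*_iAE^*_j\neq0$ if $|i-j|=1$. Assume $A$ is multiplicity-free and bipartite with primitive idempotents $E_0,\dots,E_d$. Let $\theta^*_0,\dots,\theta^*_d\in\mathbb{F}$ be mutually distinct and $A^*=\sum_i\theta^*_iE^*_i$. Assume $E_0$ is normalizing and $(E_0,E_1)$ is a tail. Then $\dfrac{\theta^*_j-\theta^*_{j-3}}{\theta^*_{j-1}-\theta^*_{j-2}}$ is independent of $j$ for $3\le j\le d$.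
   Context: A system of mutually orthogonal idempotents: $E^*_iE^*_j=\delta_{ij}E^*_i$, $\operatorname{rank}E^*_i=1$. $A$ multiplicity-free: $d+1$ distinct eigenvalues in $\mathbb{F}$; the primitive idempotent for an eigenvalue is the projection onto its eigenspace along the other eigenspaces. Bipartite: $\operatorname{tr}(E^*_iA)=0$ for all $i$. $\Delta$: graph on $E_0,\dots,E_d$ with $E_i\neq E_j$ adjacent iff $E_iA^*E_j\neq0$. $(E_0,E_1)$ is a tail if $E_0$ is adjacent to no vertex other than $E_1$ and $E_1$ is adjacent to at most one vertex other than $E_0$. The matrix $Y$ representing $A$ w.r.t. a basis $v_0,\dots,v_d$ satisfies $Av_j=\sum_iY_{ij}v_i$. An eigenvalue $\theta$ of $A$ is normalizing if some basis with $v_i\in E^*_iV$ makes every row sum of the matrix representing $A$ equal to $\theta$; a primitive idempotent is normalizing if its eigenvalue is. *)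

theory Defs
  imports "Jordan_Normal_Form.DL_Rank" "Jordan_Normal_Form.Char_Poly"
begin

text \<open>Endomorphisms of V = F^(d+1) are represented by (d+1) x (d+1) matrices.\<close>

definition mat_trace :: "'a::comm_ring_1 mat \<Rightarrow> 'a" where
  "mat_trace M = (\<Sum>i<dim_row M. M $$ (i,i))"

definition mat_rank :: "'a::field mat \<Rightarrow> nat" where
  "mat_rank M = vec_space.rank (dim_row M) M"

definition orth_idem_system :: "nat \<Rightarrow> (nat \<Rightarrow> 'a::field mat) \<Rightarrow> bool" where
  "orth_idem_system d Es \<longleftrightarrow>
     (\<forall>i\<le>d. Es i \<in> carrier_mat (d+1) (d+1) \<and> mat_rank (Es i) = 1) \<and>
     (\<forall>i\<le>d. \<forall>j\<le>d. Es i * Es j = (if i = j then Es i else 0\<^sub>m (d+1) (d+1)))"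

definition multiplicity_free :: "nat \<Rightarrow> 'a::field mat \<Rightarrow> bool" where
  "multiplicity_free d A \<longleftrightarrow> (\<exists>th. inj_on th {0..d} \<and> (\<forall>i\<le>d. eigenvalue A (th i)))"

definition primitive_idempotent :: "nat \<Rightarrow> 'a::field mat \<Rightarrow> 'a \<Rightarrow> 'a mat \<Rightarrow> bool" where
  "primitive_idempotent d A th E \<longleftrightarrow> E \<in> carrier_mat (d+1) (d+1) \<and>
     (\<forall>v \<in> carrier_vec (d+1). A *\<^sub>v v = th \<cdot>\<^sub>v v \<longrightarrow> E *\<^sub>v v = v) \<and>
     (\<forall>mu v. mu \<noteq> th \<longrightarrow> v \<in> carrier_vec (d+1) \<longrightarrow> A *\<^sub>v v = mu \<cdot>\<^sub>v v \<longrightarrow> E *\<^sub>v v = 0\<^sub>v (d+1))"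

definition bipartite :: "nat \<Rightarrow> (nat \<Rightarrow> 'a::field mat) \<Rightarrow> 'a mat \<Rightarrow> bool" where
  "bipartite d Es A \<longleftrightarrow> (\<forall>i\<le>d. mat_trace (Es i * A) = 0)"

definition dual_comb :: "nat \<Rightarrow> (nat \<Rightarrow> 'a::field) \<Rightarrow> (nat \<Rightarrow> 'a mat) \<Rightarrow> 'a mat" where
  "dual_comb d ths Es = mat (d+1) (d+1) (\<lambda>(r,c). \<Sum>i\<le>d. ths i * (Es i $$ (r,c)))"

definition Delta_adj :: "nat \<Rightarrow> (nat \<Rightarrow> 'a::field mat) \<Rightarrow> 'a mat \<Rightarrow> nat \<Rightarrow> nat \<Rightarrow> bool" where
  "Delta_adj d E As i j \<longleftrightarrow> i \<le> d \<and> j \<le> d \<and> E i \<noteq> E j \<and> E i * As * E j \<noteq> 0\<^sub>m (d+1) (d+1)"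

definition is_tail :: "nat \<Rightarrow> (nat \<Rightarrow> 'a::field mat) \<Rightarrow> 'a mat \<Rightarrow> bool" where
  "is_tail d E As \<longleftrightarrow>
     (\<forall>j\<le>d. E j \<noteq> E 1 \<longrightarrow> \<not> Delta_adj d E As 0 j) \<and>
     card {E j | j. j \<le> d \<and> E j \<noteq> E 0 \<and> Delta_adj d E As 1 j} \<le> 1"

text \<open>th is normalizing: some basis v_0..v_d with v_i in E*_i V such that every row
  sum of the matrix Y representing A (A v_j = sum_i Y_ij v_i) equals th.\<close>
definition normalizing :: "nat \<Rightarrow> (nat \<Rightarrow> 'a::field mat) \<Rightarrow> 'a mat \<Rightarrow> 'a \<Rightarrow> bool" where
  "normalizing d Es A th \<longleftrightarrow>
     (\<exists>v :: nat \<Rightarrow> 'a vec. \<exists>Y :: nat \<Rightarrow> nat \<Rightarrow> 'a.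
        (\<forall>i\<le>d. v i \<in> carrier_vec (d+1) \<and> (\<exists>w \<in> carrier_vec (d+1). v i = Es i *\<^sub>v w)) \<and>
        (\<forall>c :: nat \<Rightarrow> 'a. (\<forall>k<d+1. (\<Sum>i\<le>d. c i * (v i $ k)) = 0) \<longrightarrow> (\<forall>i\<le>d. c i = 0)) \<and>
        (\<forall>w \<in> carrier_vec (d+1). \<exists>c :: nat \<Rightarrow> 'a. \<forall>k<d+1. w $ k = (\<Sum>i\<le>d. c i * (v i $ k))) \<and>
        (\<forall>j\<le>d. \<forall>k<d+1. (A *\<^sub>v v j) $ k = (\<Sum>i\<le>d. Y i j * (v i $ k))) \<and>
        (\<forall>i\<le>d. (\<Sum>j\<le>d. Y i j) = th))"

end

theory Submission
  imports Defs
begin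

text \<open>
  In a basis \<open>v i \<in> E*_i V\<close> with all row sums \<open>th 0\<close>, \<open>A\<close> becomes a tridiagonal matrix \<open>Y\<close>
  with zero diagonal and nonzero off-diagonal entries, and \<open>A*\<close> becomes diagonal with entries
  \<open>ths i\<close>. Such a \<open>Y\<close> is self-adjoint for a diagonal bilinear form, so its eigenvectors are
  orthogonal, and the all-ones vector is the eigenvector for \<open>th 0\<close>. Since \<open>E 0\<close> is adjacent
  only to \<open>E 1\<close>, the vector \<open>ths\<close> lies in the span of the first two eigenvectors, so
  \<open>t = ths - a\<close> is a \<open>th 1\<close>-eigenvector for some constant \<open>a\<close>; since \<open>E 1\<close> has at most one further
  neighbour \<open>E m\<close>, also \<open>Y t\<^sup>2 = th m t\<^sup>2 + \<eta> t + \<mu>\<close>. Row \<open>i\<close> of these two equations relates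
  \<open>t (i-1), t i, t (i+1)\<close>; eliminating the entries of \<open>Y\<close> shows that all pairs \<open>(t i, t (i+1))\<close>
  lie on one conic symmetric in its two variables, which forces
  \<open>t (i-1) + t (i+1) = \<beta> t i + \<gamma>\<close>. Hence \<open>ths j - ths (j-3) = (\<beta> + 1) (ths (j-1) - ths (j-2))\<close>.
\<close>

section \<open>Recurrences from a conic\<close>

lemma quadratic_relation_shift:
  fixes s t u :: "'a::field"
  assumes quad: "s^2 - \<beta>*s*t + t^2 - \<gamma>*(s+t) - \<delta> = 0"
    and rel: "\<theta>*t*(s+u) - k*s*u = \<tau>*t^2 + \<eta>*t + \<mu>"
    and \<beta>: "\<theta>*\<beta> = \<tau> + k" and \<gamma>: "\<gamma>*(\<theta>+k) = \<eta>" and \<delta>: "\<delta>*k = \<mu>"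
    and nondeg: "k*s \<noteq> \<theta>*t"
  shows "s + u = \<beta>*t + \<gamma> \<and> t^2 - \<beta>*t*u + u^2 - \<gamma>*(t+u) - \<delta> = 0"
proof -
  define u' where "u' = \<beta>*t + \<gamma> - s"
  have s2: "s^2 = \<beta>*s*t - t^2 + \<gamma>*(s+t) + \<delta>"
    using quad by (simp add: algebra_simps)
  have "\<theta>*t*(s+u') - k*s*u' = (\<theta>*\<beta>)*t^2 + \<theta>*\<gamma>*t - k*s*(\<beta>*t+\<gamma>) + k*s^2"
    unfolding u'_def by (simp add: algebra_simps power2_eq_square)
  also have "\<dots> = (\<tau>+k)*t^2 + \<theta>*\<gamma>*t - k*s*(\<beta>*t+\<gamma>) + k*(\<beta>*s*t - t^2 + \<gamma>*(s+t) + \<delta>)"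
    unfolding \<beta> s2 ..
  also have "\<dots> = \<tau>*t^2 + (\<gamma>*(\<theta>+k))*t + \<delta>*k"
    by (simp add: algebra_simps power2_eq_square)
  finally have rel': "\<theta>*t*(s+u') - k*s*u' = \<tau>*t^2 + \<eta>*t + \<mu>"
    unfolding \<gamma> \<delta> .
  \<comment> \<open>\<open>rel\<close> is linear in \<open>u\<close> with leading coefficient \<open>\<theta>*t - k*s \<noteq> 0\<close>, so it has the single solution \<open>u'\<close>\<close>
  have "(u - u')*(\<theta>*t - k*s) = (\<theta>*t*(s+u) - k*s*u) - (\<theta>*t*(s+u') - k*s*u')"
    by (simp add: algebra_simps)
  with rel rel' nondeg have "u = u'" by simp
  moreover have "t^2 - \<beta>*t*u' + u'^2 - \<gamma>*(t+u') - \<delta> = s^2 - \<beta>*s*t + t^2 - \<gamma>*(s+t) - \<delta>"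
    unfolding u'_def by (simp add: algebra_simps power2_eq_square)
  ultimately show ?thesis using quad unfolding u'_def by simp
qed

lemma weighted_pair_identities:
  fixes s u c b :: "'a::field"
  assumes sum: "c + b = k" and lin: "c*s + b*u = \<theta>*t"
    and sq: "c*s^2 + b*u^2 = \<tau>*t^2 + \<eta>*t + \<mu>"
  shows "\<theta>*t*(s+u) - k*s*u = \<tau>*t^2 + \<eta>*t + \<mu>" and "b*(u - s) = \<theta>*t - k*s"
proof -
  show "\<theta>*t*(s+u) - k*s*u = \<tau>*t^2 + \<eta>*t + \<mu>"
    unfolding sum[symmetric] mult.assoc[symmetric] lin[symmetric] sq[symmetric]
    by (simp add: algebra_simps power2_eq_square)
  show "b*(u - s) = \<theta>*t - k*s"
    unfolding sum[symmetric] lin[symmetric] by (simp add: algebra_simps)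
qed

text \<open>The invariant: all points \<open>(t n, t (n+1))\<close> lie on the conic
  \<open>x^2 - \<beta>xy + y^2 - \<gamma>(x+y) = \<delta>\<close>.\<close>

lemma affine_recurrence_of_conic:
  fixes t :: "nat \<Rightarrow> 'a::field"
  assumes conic0: "t 0^2 - \<beta>*t 0*t 1 + t 1^2 - \<gamma>*(t 0 + t 1) - \<delta> = 0"
    and rel: "\<And>j. 1 \<le> j \<Longrightarrow> j < d \<Longrightarrow>
      \<theta> * t j * (t (j-1) + t (j+1)) - k * t (j-1) * t (j+1) = \<tau> * t j^2 + \<eta> * t j + \<mu>"
    and nondeg: "\<And>j. 1 \<le> j \<Longrightarrow> j < d \<Longrightarrow> k * t (j-1) \<noteq> \<theta> * t j"
    and \<beta>: "\<theta>*\<beta> = \<tau> + k" and \<gamma>: "\<gamma>*(\<theta>+k) = \<eta>" and \<delta>: "\<delta>*k = \<mu>"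
    and j: "1 \<le> j" "j < d"
  shows "t (j-1) + t (j+1) = \<beta> * t j + \<gamma>"
proof -
  have conic: "t n^2 - \<beta>*t n*t (n+1) + t (n+1)^2 - \<gamma>*(t n + t (n+1)) - \<delta> = 0" if "n + 1 < d" for n
    using that
  proof (induction n)
    case 0
    show ?case using conic0 by simp
  next
    case (Suc n)
    with quadratic_relation_shift[OF _ rel[of "Suc n"] \<beta> \<gamma> \<delta> nondeg[of "Suc n"]]
    show ?case by simp
  qed
  obtain n where "j = Suc n" using j by (cases j) auto
  with conic[of n] quadratic_relation_shift[OF _ rel[OF j] \<beta> \<gamma> \<delta> nondeg[OF j]] j
  show ?thesis by simp
qed

lemma affine_recurrence_of_row_relations:
  fixes t c b :: "nat \<Rightarrow> 'a::field"
  assumes d: "3 \<le> d" and inj: "inj_on t {..d}" and c0: "c 0 = 0"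
    and row_sum: "\<And>j. j < d \<Longrightarrow> c j + b j = k"
    and row_lin: "\<And>j. j < d \<Longrightarrow> c j * t (j-1) + b j * t (j+1) = \<theta> * t j"
    and row_sq: "\<And>j. j < d \<Longrightarrow> c j * t (j-1)^2 + b j * t (j+1)^2 = \<tau> * t j^2 + \<eta> * t j + \<mu>"
    and b_nz: "\<And>j. j < d \<Longrightarrow> b j \<noteq> 0"
  shows "\<exists>\<beta> \<gamma>. \<forall>j. 1 \<le> j \<longrightarrow> j < d \<longrightarrow> t (j-1) + t (j+1) = \<beta> * t j + \<gamma>"
proof -
  note rel = weighted_pair_identities(1)[OF row_sum row_lin row_sq]
  note gap = weighted_pair_identities(2)[OF row_sum row_lin row_sq]
  have t_ne: "t i \<noteq> t j" if "i \<le> d" "j \<le> d" "i \<noteq> j" for i j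
    using inj that by (auto dest: inj_onD)
  have nondeg: "k * t (j-1) \<noteq> \<theta> * t j" if "1 \<le> j" "j < d" for j
    using gap[of j] b_nz[of j] t_ne[of "j+1" "j-1"] that by auto
  have k: "k = b 0" and base_lin: "k * t 1 = \<theta> * t 0" and base_sq: "k * t 1^2 = \<tau> * t 0^2 + \<eta> * t 0 + \<mu>"
    using row_sum[of 0] row_lin[of 0] row_sq[of 0] c0 d by simp_all
  have k_nz: "k \<noteq> 0" using k b_nz[of 0] d by simp
  have \<theta>_nz: "\<theta> \<noteq> 0"
    using base_lin k_nz nondeg[of 2] d by auto
  have \<theta>k_nz: "\<theta> + k \<noteq> 0"
  proof
    assume "\<theta> + k = 0"
    then have \<theta>: "\<theta> = - k" by (simp add: eq_neg_iff_add_eq_0)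
    with base_lin have "k * t 1 = k * - t 0" by simp
    with k_nz have "t 1 = - t 0" by (metis mult_left_cancel)
    with gap[of 1] \<theta> d have "b 1 * (t 2 - t 0) = 0" by (simp add: numeral_2_eq_2)
    then show False using b_nz[of 1] t_ne[of 2 0] d by simp
  qed
  define \<beta> where "\<beta> = (\<tau> + k) / \<theta>"
  define \<gamma> where "\<gamma> = \<eta> / (\<theta> + k)"
  define \<delta> where "\<delta> = \<mu> / k"
  have \<beta>: "\<theta>*\<beta> = \<tau> + k" and \<gamma>: "\<gamma>*(\<theta>+k) = \<eta>" and \<delta>: "\<delta>*k = \<mu>"
    using \<theta>_nz \<theta>k_nz k_nz unfolding \<beta>_def \<gamma>_def \<delta>_def by simp_all
  have "k * (t 0^2 - \<beta>*t 0*t 1 + t 1^2 - \<gamma>*(t 0 + t 1) - \<delta>)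
      = k*t 0^2 - (\<theta>*\<beta>)*t 0^2 + (k*t 1^2) - (\<gamma>*(\<theta>+k))*t 0 - \<delta>*k"
    using base_lin by (simp add: algebra_simps power2_eq_square)
  also have "\<dots> = 0" unfolding \<beta> \<gamma> \<delta> base_sq by (simp add: algebra_simps)
  finally have conic0: "t 0^2 - \<beta>*t 0*t 1 + t 1^2 - \<gamma>*(t 0 + t 1) - \<delta> = 0"
    using k_nz by simp
  show ?thesis
    using affine_recurrence_of_conic[OF conic0 rel nondeg \<beta> \<gamma> \<delta>] by auto
qed

lemma ratio_const_of_affine_recurrence:
  fixes t :: "nat \<Rightarrow> 'a::field"
  assumes rec: "\<And>j. 1 \<le> j \<Longrightarrow> j < d \<Longrightarrow> t (j-1) + t (j+1) = \<beta> * t j + \<gamma>"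
    and inj: "inj_on t {0..d}"
    and j: "3 \<le> j" "j \<le> d"
  shows "(t j - t (j-3)) / (t (j-1) - t (j-2)) = \<beta> + 1"
proof -
  have "t j = \<beta> * t (j-1) + \<gamma> - t (j-2)" and "t (j-3) = \<beta> * t (j-2) + \<gamma> - t (j-1)"
    using rec[of "j-1"] rec[of "j-2"] j by (simp_all add: numeral_3_eq_3 numeral_2_eq_2 Suc_diff_Suc algebra_simps)
  then have "t j - t (j-3) = (\<beta> + 1) * (t (j-1) - t (j-2))"
    by (simp only:) (simp add: algebra_simps)
  moreover have "t (j-1) \<noteq> t (j-2)" using inj j by (auto dest: inj_onD)
  ultimately show ?thesis by simp
qed

section \<open>Bipartite tridiagonal matrices and their eigenvectors\<close>

text \<open>Vectors and matrices indexed by \<open>{..d}\<close> are represented by plain functions.\<close>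

definition mat_apply :: "nat \<Rightarrow> (nat \<Rightarrow> nat \<Rightarrow> 'a::comm_semiring_0) \<Rightarrow> (nat \<Rightarrow> 'a) \<Rightarrow> nat \<Rightarrow> 'a" where
  "mat_apply d Y w i = (\<Sum>l\<le>d. Y i l * w l)"

lemma mat_apply_cong: "(\<And>l. l \<le> d \<Longrightarrow> w l = w' l) \<Longrightarrow> mat_apply d Y w i = mat_apply d Y w' i"
  unfolding mat_apply_def by (intro sum.cong) auto

lemma mat_apply_lincomb:
  "mat_apply d Y (\<lambda>l. \<Sum>j\<in>S. c j * f j l) i = (\<Sum>j\<in>S. c j * mat_apply d Y (f j) i)"
  unfolding mat_apply_def sum_distrib_left
  by (subst sum.swap) (simp add: mult_ac)

lemma mat_apply_affine:
  fixes Y :: "nat \<Rightarrow> nat \<Rightarrow> 'a::comm_semiring_1"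
  shows "mat_apply d Y (\<lambda>l. c0 + c1 * f l + c2 * h l) i
     = c0 * mat_apply d Y (\<lambda>l. 1) i + c1 * mat_apply d Y f i + c2 * mat_apply d Y h i"
  unfolding mat_apply_def by (simp add: sum.distrib sum_distrib_left distrib_left mult_ac)

lemma mat_apply_delta:
  assumes "j \<le> d"
  shows "mat_apply d Y (\<lambda>l. if l = j then a else 0) i = Y i j * a"
proof -
  have "mat_apply d Y (\<lambda>l. if l = j then a else 0) i = (\<Sum>l\<le>d. if l = j then Y i j * a else 0)"
    unfolding mat_apply_def by (intro sum.cong) auto
  then show ?thesis using assms by simp
qed

fun symmetrizer :: "(nat \<Rightarrow> nat \<Rightarrow> 'a::field) \<Rightarrow> nat \<Rightarrow> 'a" where
  "symmetrizer Y 0 = 1"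
| "symmetrizer Y (Suc i) = symmetrizer Y i * Y i (Suc i) / Y (Suc i) i"

definition sym_form :: "nat \<Rightarrow> (nat \<Rightarrow> nat \<Rightarrow> 'a::field) \<Rightarrow> (nat \<Rightarrow> 'a) \<Rightarrow> (nat \<Rightarrow> 'a) \<Rightarrow> 'a" where
  "sym_form d Y y w = (\<Sum>i\<le>d. symmetrizer Y i * y i * w i)"

locale bipartite_tridiagonal =
  fixes d :: nat and Y :: "nat \<Rightarrow> nat \<Rightarrow> 'a::field"
  assumes entry_far: "\<And>i j. i \<le> d \<Longrightarrow> j \<le> d \<Longrightarrow> i > j + 1 \<or> j > i + 1 \<Longrightarrow> Y i j = 0"
    and entry_diag: "\<And>i. i \<le> d \<Longrightarrow> Y i i = 0"
    and entry_above_nz: "\<And>i. i < d \<Longrightarrow> Y i (i+1) \<noteq> 0"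
    and entry_below_nz: "\<And>i. i < d \<Longrightarrow> Y (i+1) i \<noteq> 0"
begin

lemma symmetrizer_nz: "i \<le> d \<Longrightarrow> symmetrizer Y i \<noteq> 0"
  by (induction i) (use entry_above_nz entry_below_nz in auto)

lemma symmetrizer_symmetric:
  assumes "i \<le> d" "j \<le> d"
  shows "symmetrizer Y i * Y i j = symmetrizer Y j * Y j i"
proof -
  consider "i = j" | "i > j + 1 \<or> j > i + 1" | "j = i + 1" | "i = j + 1" by linarith
  then show ?thesis
    by cases (use assms entry_far entry_below_nz in auto)
qed

lemma sym_form_mat_apply:
  "sym_form d Y (mat_apply d Y y) w = sym_form d Y y (mat_apply d Y w)"
proof -
  have "sym_form d Y (mat_apply d Y y) w = (\<Sum>i\<le>d. \<Sum>l\<le>d. (symmetrizer Y i * Y i l) * y l * w i)"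
    unfolding sym_form_def mat_apply_def by (simp add: sum_distrib_left sum_distrib_right mult_ac)
  also have "\<dots> = (\<Sum>l\<le>d. \<Sum>i\<le>d. (symmetrizer Y l * Y l i) * y l * w i)"
    by (subst sum.swap) (simp add: symmetrizer_symmetric)
  also have "\<dots> = sym_form d Y y (mat_apply d Y w)"
    unfolding sym_form_def mat_apply_def by (simp add: sum_distrib_left mult_ac)
  finally show ?thesis .
qed

text \<open>For \<open>j = 0\<close> we have \<open>j - 1 = j\<close>, and the first summand is the vanishing diagonal entry.\<close>

lemma mat_apply_row:
  assumes j: "j < d"
  shows "mat_apply d Y w j = Y j (j-1) * w (j-1) + Y j (j+1) * w (j+1)"
proof -
  have "Y j l = 0" if l: "l \<le> d" "l \<notin> {j-1, j+1}" for l
  proof (cases "l = j")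
    case True
    then show ?thesis using entry_diag j by simp
  next
    case False
    with l have "j > l + 1 \<or> l > j + 1" by auto
    then show ?thesis using entry_far l j by simp
  qed
  then have "mat_apply d Y w j = (\<Sum>l\<in>{j-1, j+1}. Y j l * w l)"
    unfolding mat_apply_def using j by (intro sum.mono_neutral_right) auto
  then show ?thesis by simp
qed

end

locale eigen_family =
  fixes d :: nat and Y :: "nat \<Rightarrow> nat \<Rightarrow> 'a::field"
    and \<theta> :: "nat \<Rightarrow> 'a" and z :: "nat \<Rightarrow> nat \<Rightarrow> 'a"
  assumes eigen: "\<And>j i. j \<le> d \<Longrightarrow> i \<le> d \<Longrightarrow> mat_apply d Y (z j) i = \<theta> j * z j i"
    and eigenvector_nz: "\<And>j. j \<le> d \<Longrightarrow> \<exists>i\<le>d. z j i \<noteq> 0"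
    and eigenvalues_distinct: "inj_on \<theta> {..d}"
begin

lemma eigenvectors_independent:
  "finite S \<Longrightarrow> S \<subseteq> {..d} \<Longrightarrow> (\<And>i. i \<le> d \<Longrightarrow> (\<Sum>j\<in>S. c j * z j i) = 0) \<Longrightarrow> j \<in> S \<Longrightarrow> c j = 0"
proof (induction S arbitrary: c j rule: finite_induct)
  case empty then show ?case by simp
next
  case (insert m S)
  have m: "m \<le> d" and S: "S \<subseteq> {..d}" using insert.prems by auto
  have sum0: "c m * z m i + (\<Sum>j\<in>S. c j * z j i) = 0" if "i \<le> d" for i
    using insert.prems(2)[OF that] insert.hyps by simp
  \<comment> \<open>apply \<open>Y - \<theta> m\<close> to the relation to eliminate \<open>z m\<close>\<close>
  have "(\<Sum>j\<in>S. (c j * (\<theta> j - \<theta> m)) * z j i) = 0" if i: "i \<le> d" for i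
  proof -
    have "mat_apply d Y (\<lambda>l. \<Sum>j\<in>insert m S. c j * z j l) i = 0"
      using insert.prems(2) by (simp add: mat_apply_def)
    also have "mat_apply d Y (\<lambda>l. \<Sum>j\<in>insert m S. c j * z j l) i
        = (\<Sum>j\<in>insert m S. c j * (\<theta> j * z j i))"
      unfolding mat_apply_lincomb using insert.prems(1) i by (intro sum.cong) (auto simp: eigen)
    finally have "(\<Sum>j\<in>insert m S. c j * (\<theta> j * z j i)) = 0" .
    then have "c m * (\<theta> m * z m i) + (\<Sum>j\<in>S. c j * (\<theta> j * z j i)) = 0"
      using insert.hyps by simp
    moreover have "c m * (\<theta> m * z m i) + (\<Sum>j\<in>S. \<theta> m * (c j * z j i)) = 0"
      using sum0[OF i] by (simp add: sum_distrib_left[symmetric] distrib_left[symmetric] mult_ac)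
    ultimately have "(\<Sum>j\<in>S. c j * (\<theta> j * z j i)) = (\<Sum>j\<in>S. \<theta> m * (c j * z j i))"
      by (metis add_left_cancel)
    then show ?thesis
      by (simp add: sum_subtractf algebra_simps)
  qed
  then have "c j * (\<theta> j - \<theta> m) = 0" if "j \<in> S" for j
    using insert.IH[OF S, of "\<lambda>j. c j * (\<theta> j - \<theta> m)"] that by blast
  moreover have "\<theta> j \<noteq> \<theta> m" if "j \<in> S" for j
    using eigenvalues_distinct S m insert.hyps(2) that by (auto dest: inj_onD)
  ultimately have cS: "c j = 0" if "j \<in> S" for j using that by auto
  obtain i where "i \<le> d" "z m i \<noteq> 0" using eigenvector_nz[OF m] by auto
  then have "c m = 0" using sum0 cS by fastforce
  with cS insert.prems(3) show ?case by auto
qed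

lemma eigenvectors_span: "\<exists>a. \<forall>i\<le>d. y i = (\<Sum>j\<le>d. a j * z j i)"
proof -
  define Z where "Z = mat (d+1) (d+1) (\<lambda>(i,j). z j i)"
  have Z: "Z \<in> carrier_mat (d+1) (d+1)" unfolding Z_def by simp
  have Z_mult: "(Z *\<^sub>v x) $ i = (\<Sum>j\<le>d. x $ j * z j i)" if "i \<le> d" "x \<in> carrier_vec (d+1)" for i x
    using that unfolding Z_def
    by (auto simp: scalar_prod_def lessThan_Suc_atMost[symmetric] atLeast0LessThan mult.commute intro!: sum.cong)
  have "det Z \<noteq> 0"
  proof
    assume "det Z = 0"
    then obtain x where x: "x \<in> carrier_vec (d+1)" "x \<noteq> 0\<^sub>v (d+1)" "Z *\<^sub>v x = 0\<^sub>v (d+1)"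
      using det_0_iff_vec_prod_zero_field[OF Z] by auto
    have "x $ j = 0" if "j \<le> d" for j
    proof (rule eigenvectors_independent[of "{..d}"])
      fix i assume i: "i \<le> d"
      show "(\<Sum>j\<le>d. x $ j * z j i) = 0" using Z_mult[OF i x(1)] x(3) i by simp
    qed (use that in auto)
    then have "x = 0\<^sub>v (d+1)" using x(1) by (intro eq_vecI) auto
    with x(2) show False by simp
  qed
  then obtain B where B: "B \<in> carrier_mat (d+1) (d+1)" "Z * B = 1\<^sub>m (d+1)"
    using det_non_zero_imp_unit[OF Z] unfolding Units_def ring_mat_def by auto
  define a where "a = B *\<^sub>v vec (d+1) y"
  have "Z *\<^sub>v a = vec (d+1) y"
    unfolding a_def using B Z by (simp flip: assoc_mult_mat_vec)
  then have "y i = (\<Sum>j\<le>d. a $ j * z j i)" if "i \<le> d" for i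
    using Z_mult[OF that, of a] B that unfolding a_def by simp
  then show ?thesis by blast
qed

end

locale tridiagonal_eigenbasis = bipartite_tridiagonal + eigen_family
begin

lemma eigenvectors_orthogonal:
  assumes "a \<le> d" "b \<le> d" "a \<noteq> b"
  shows "sym_form d Y (z a) (z b) = 0"
proof -
  have "sym_form d Y (mat_apply d Y (z a)) (z b) = \<theta> a * sym_form d Y (z a) (z b)"
    and "sym_form d Y (z a) (mat_apply d Y (z b)) = \<theta> b * sym_form d Y (z a) (z b)"
    unfolding sym_form_def using assms by (simp_all add: eigen sum_distrib_left algebra_simps)
  moreover have "\<theta> a \<noteq> \<theta> b" using eigenvalues_distinct assms by (auto dest: inj_onD)
  ultimately show ?thesis using sym_form_mat_apply[of "z a" "z b"] by auto
qed

lemma sym_form_eigen_coeff: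
  assumes y: "\<And>i. i \<le> d \<Longrightarrow> y i = (\<Sum>l\<le>d. a l * z l i)" and j: "j \<le> d"
  shows "sym_form d Y y (z j) = a j * sym_form d Y (z j) (z j)"
proof -
  have "sym_form d Y y (z j) = (\<Sum>l\<le>d. a l * sym_form d Y (z l) (z j))"
    unfolding sym_form_def using y
    by (simp add: sum_distrib_left sum_distrib_right mult_ac) (rule sum.swap)
  also have "\<dots> = a j * sym_form d Y (z j) (z j)"
    using j eigenvectors_orthogonal by (subst sum.remove[of _ j]) (auto intro!: sum.neutral)
  finally show ?thesis .
qed

lemma sym_form_eigenvector_nz:
  assumes j: "j \<le> d"
  shows "sym_form d Y (z j) (z j) \<noteq> 0"
proof
  assume z0: "sym_form d Y (z j) (z j) = 0"
  have "symmetrizer Y i * z j i = 0" if i: "i \<le> d" for i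
  proof -
    let ?e = "\<lambda>r. if r = i then 1 else 0"
    obtain a where "\<forall>r\<le>d. ?e r = (\<Sum>l\<le>d. a l * z l r)"
      using eigenvectors_span[of ?e] by (elim exE)
    then have "sym_form d Y ?e (z j) = a j * sym_form d Y (z j) (z j)"
      using sym_form_eigen_coeff[of ?e a j] j by blast
    then have "sym_form d Y ?e (z j) = 0" using z0 by simp
    moreover have "sym_form d Y ?e (z j) = (\<Sum>r\<le>d. if r = i then symmetrizer Y r * z j r else 0)"
      unfolding sym_form_def by (intro sum.cong) auto
    ultimately show ?thesis using i by simp
  qed
  then show False using eigenvector_nz[OF j] symmetrizer_nz by auto
qed

lemma eigen_coeff_eq_zero:
  assumes "\<And>i. i \<le> d \<Longrightarrow> y i = (\<Sum>l\<le>d. a l * z l i)" "j \<le> d" "sym_form d Y y (z j) = 0"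
  shows "a j = 0"
  using sym_form_eigen_coeff[OF assms(1,2)] sym_form_eigenvector_nz[OF assms(2)] assms(3) by simp

end

section \<open>Coordinates in a basis adapted to the dual idempotents\<close>

lemma index_mult_mat_vec_sum:
  "M \<in> carrier_mat n n' \<Longrightarrow> w \<in> carrier_vec n' \<Longrightarrow> k < n \<Longrightarrow> (M *\<^sub>v w) $ k = (\<Sum>l<n'. M $$ (k,l) * w $ l)"
  by (auto simp: scalar_prod_def lessThan_atLeast0 intro!: sum.cong)

lemma zero_mult_mat_vec: "w \<in> carrier_vec nc \<Longrightarrow> 0\<^sub>m nr nc *\<^sub>v w = 0\<^sub>v nr"
  by (intro eq_vecI) (auto simp: scalar_prod_def)

lemma index_mult_mat_vec_unit_vec:
  fixes M :: "'a::semiring_1 mat"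
  assumes "M \<in> carrier_mat n n'" "r < n" "c < n'"
  shows "(M *\<^sub>v unit_vec n' c) $ r = M $$ (r,c)"
proof -
  have "dim_row M = n" "dim_col M = n'" using assms(1) by auto
  then show ?thesis using assms(2,3) by simp
qed

lemma mat_trace_rank_one:
  fixes M :: "'a::field mat"
  assumes M: "M \<in> carrier_mat n n" and x: "x \<in> carrier_vec n" and k0: "k0 < n" "x $ k0 \<noteq> 0"
    and range: "\<And>w. w \<in> carrier_vec n \<Longrightarrow> \<exists>c. M *\<^sub>v w = c \<cdot>\<^sub>v x"
    and eigen: "M *\<^sub>v x = a \<cdot>\<^sub>v x"
  shows "mat_trace M = a"
proof -
  have diag: "M $$ (k,k) = M $$ (k0,k) * x $ k / x $ k0" if k: "k < n" for k
  proof -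
    obtain c where c: "M *\<^sub>v unit_vec n k = c \<cdot>\<^sub>v x" using range[of "unit_vec n k"] by auto
    have "M $$ (r,k) = c * x $ r" if "r < n" for r
      using arg_cong[OF c, of "\<lambda>w. w $ r"] M x k that by simp
    then show ?thesis using k k0 by simp
  qed
  have "mat_trace M = (\<Sum>k<n. M $$ (k0,k) * x $ k) / x $ k0"
    unfolding mat_trace_def using M diag by (simp add: sum_divide_distrib)
  also have "(\<Sum>k<n. M $$ (k0,k) * x $ k) = (M *\<^sub>v x) $ k0"
    using M x k0 by (simp add: scalar_prod_def lessThan_atLeast0)
  finally show ?thesis using eigen x k0 by simp
qed

locale coordinate_basis =
  fixes d :: nat and Es :: "nat \<Rightarrow> 'a::field mat" and A :: "'a mat"
    and v :: "nat \<Rightarrow> 'a vec" and Y :: "nat \<Rightarrow> nat \<Rightarrow> 'a"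
  assumes Es_carrier: "\<And>i. i \<le> d \<Longrightarrow> Es i \<in> carrier_mat (d+1) (d+1)"
    and Es_mult: "\<And>i j. i \<le> d \<Longrightarrow> j \<le> d \<Longrightarrow> Es i * Es j = (if i = j then Es i else 0\<^sub>m (d+1) (d+1))"
    and A_carrier: "A \<in> carrier_mat (d+1) (d+1)"
    and v_carrier: "\<And>i. i \<le> d \<Longrightarrow> v i \<in> carrier_vec (d+1)"
    and v_range: "\<And>i. i \<le> d \<Longrightarrow> \<exists>w\<in>carrier_vec (d+1). v i = Es i *\<^sub>v w"
    and v_independent: "\<And>c. \<forall>k<d+1. (\<Sum>i\<le>d. c i * v i $ k) = 0 \<Longrightarrow> \<forall>i\<le>d. c i = 0"
    and v_spanning: "\<And>w. w \<in> carrier_vec (d+1) \<Longrightarrow> \<exists>c. \<forall>k<d+1. w $ k = (\<Sum>i\<le>d. c i * v i $ k)"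
    and A_v: "\<And>j k. j \<le> d \<Longrightarrow> k < d+1 \<Longrightarrow> (A *\<^sub>v v j) $ k = (\<Sum>i\<le>d. Y i j * v i $ k)"
begin

lemma dim_v[simp]: "i \<le> d \<Longrightarrow> dim_vec (v i) = d+1"
  by (rule carrier_vecD[OF v_carrier])

definition comb :: "(nat \<Rightarrow> 'a) \<Rightarrow> 'a vec" where
  "comb z = vec (d+1) (\<lambda>k. \<Sum>i\<le>d. z i * v i $ k)"

lemma comb_carrier: "comb z \<in> carrier_vec (d+1)"
  and dim_comb[simp]: "dim_vec (comb z) = d+1"
  and index_comb[simp]: "k < d+1 \<Longrightarrow> comb z $ k = (\<Sum>i\<le>d. z i * v i $ k)"
  unfolding comb_def by simp_all

declare comb_carrier[simplified, simp]

lemma comb_cong: "(\<And>i. i \<le> d \<Longrightarrow> z i = z' i) \<Longrightarrow> comb z = comb z'"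
  unfolding comb_def by (intro eq_vecI) (auto intro!: sum.cong)

lemma comb_eq_zero:
  assumes z: "comb z = 0\<^sub>v (d+1)" and i: "i \<le> d"
  shows "z i = 0"
proof -
  have "(\<Sum>i\<le>d. z i * v i $ k) = 0" if "k < d+1" for k
    using arg_cong[OF z, of "\<lambda>w. w $ k"] that by simp
  then show ?thesis using v_independent[of z] i by blast
qed

lemma comb_inj: assumes "comb z = comb z'" "i \<le> d" shows "z i = z' i"
proof -
  have "comb (\<lambda>i. z i - z' i) = 0\<^sub>v (d+1)"
  proof (rule eq_vecI)
    fix k assume "k < dim_vec (0\<^sub>v (d+1) :: 'a vec)"
    then have k: "k < d+1" by simp
    have "comb z $ k = comb z' $ k" using assms(1) by simp
    then show "comb (\<lambda>i. z i - z' i) $ k = 0\<^sub>v (d+1) $ k"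
      using k by (simp add: left_diff_distrib sum_subtractf)
  qed simp
  from comb_eq_zero[OF this assms(2)] show ?thesis by simp
qed

lemma comb_surj:
  assumes w: "w \<in> carrier_vec (d+1)"
  shows "\<exists>z. w = comb z"
proof -
  obtain c where "\<forall>k<d+1. w $ k = (\<Sum>i\<le>d. c i * v i $ k)" using v_spanning[OF w] by blast
  then have "w = comb c" using w by (intro eq_vecI) auto
  then show ?thesis by blast
qed

lemma comb_delta:
  assumes j: "j \<le> d"
  shows "comb (\<lambda>i. if i = j then a else 0) = a \<cdot>\<^sub>v v j"
proof -
  have "(\<Sum>i\<le>d. (if i = j then a else 0) * v i $ k) = (\<Sum>i\<le>d. if i = j then a * v j $ k else 0)" for k
    by (intro sum.cong) auto
  then have "(\<Sum>i\<le>d. (if i = j then a else 0) * v i $ k) = a * v j $ k" for k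
    using j by simp
  then show ?thesis using v_carrier[OF j] by (intro eq_vecI) auto
qed

lemma smult_comb: "c \<cdot>\<^sub>v comb z = comb (\<lambda>i. c * z i)"
  by (intro eq_vecI) (auto simp: sum_distrib_left mult_ac)

lemma v_nz: assumes "i \<le> d" shows "\<exists>k<d+1. v i $ k \<noteq> 0"
proof (rule ccontr)
  assume "\<not> ?thesis"
  then have "comb (\<lambda>l. if l = i then 1 else 0) = 0\<^sub>v (d+1)"
    using comb_delta[OF assms] v_carrier[OF assms] by (auto intro!: eq_vecI)
  from comb_eq_zero[OF this assms] show False by simp
qed

lemma mult_mat_comb:
  assumes M: "M \<in> carrier_mat (d+1) (d+1)"
  shows "M *\<^sub>v comb z = vec (d+1) (\<lambda>k. \<Sum>i\<le>d. z i * (M *\<^sub>v v i) $ k)"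
proof (rule eq_vecI)
  fix k assume "k < dim_vec (vec (d+1) (\<lambda>k. \<Sum>i\<le>d. z i * (M *\<^sub>v v i) $ k))"
  then have k: "k < d+1" by simp
  have "(M *\<^sub>v comb z) $ k = (\<Sum>l<d+1. \<Sum>i\<le>d. z i * (M $$ (k,l) * v i $ l))"
    using k by (subst index_mult_mat_vec_sum[OF M comb_carrier k]) (simp add: sum_distrib_left mult_ac)
  also have "\<dots> = (\<Sum>i\<le>d. \<Sum>l<d+1. z i * (M $$ (k,l) * v i $ l))"
    by (rule sum.swap)
  also have "\<dots> = (\<Sum>i\<le>d. z i * (M *\<^sub>v v i) $ k)"
    using k by (intro sum.cong refl) (simp add: index_mult_mat_vec_sum[OF M v_carrier k] sum_distrib_left distrib_left)
  finally show "(M *\<^sub>v comb z) $ k = vec (d+1) (\<lambda>k. \<Sum>i\<le>d. z i * (M *\<^sub>v v i) $ k) $ k"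
    using k by simp
qed (use M in simp)

lemma mult_mat_comb_sum:
  assumes M: "M \<in> carrier_mat (d+1) (d+1)"
  shows "M *\<^sub>v comb (\<lambda>i. \<Sum>j\<in>S. a j * f j i) = vec (d+1) (\<lambda>k. \<Sum>j\<in>S. a j * (M *\<^sub>v comb (f j)) $ k)"
proof (rule eq_vecI)
  fix k assume "k < dim_vec (vec (d+1) (\<lambda>k. \<Sum>j\<in>S. a j * (M *\<^sub>v comb (f j)) $ k))"
  then have k: "k < d+1" by simp
  have "(M *\<^sub>v comb (\<lambda>i. \<Sum>j\<in>S. a j * f j i)) $ k = (\<Sum>i\<le>d. \<Sum>j\<in>S. a j * (f j i * (M *\<^sub>v v i) $ k))"
    unfolding mult_mat_comb[OF M] using k by (simp add: sum_distrib_left mult_ac)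
  also have "\<dots> = (\<Sum>j\<in>S. \<Sum>i\<le>d. a j * (f j i * (M *\<^sub>v v i) $ k))"
    by (rule sum.swap)
  also have "\<dots> = (\<Sum>j\<in>S. a j * (M *\<^sub>v comb (f j)) $ k)"
    unfolding mult_mat_comb[OF M] using k by (simp add: sum_distrib_left)
  finally show "(M *\<^sub>v comb (\<lambda>i. \<Sum>j\<in>S. a j * f j i)) $ k = vec (d+1) (\<lambda>k. \<Sum>j\<in>S. a j * (M *\<^sub>v comb (f j)) $ k) $ k"
    using k by simp
qed (use M in simp)

lemma Es_v: assumes "i \<le> d" "l \<le> d" shows "Es l *\<^sub>v v i = (if l = i then v i else 0\<^sub>v (d+1))"
proof -
  obtain w where w: "w \<in> carrier_vec (d+1)" "v i = Es i *\<^sub>v w" using v_range[OF assms(1)] by blast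
  have "Es l *\<^sub>v v i = (Es l * Es i) *\<^sub>v w"
    unfolding w(2) using assoc_mult_mat_vec[OF Es_carrier[OF assms(2)] Es_carrier[OF assms(1)] w(1)] by simp
  then show ?thesis using Es_mult[OF assms(2,1)] w by auto
qed

lemma Es_comb:
  assumes l: "l \<le> d"
  shows "Es l *\<^sub>v comb z = z l \<cdot>\<^sub>v v l"
proof (rule eq_vecI)
  fix k assume "k < dim_vec (z l \<cdot>\<^sub>v v l)"
  then have k: "k < d+1" using v_carrier[OF l] by simp
  have "(\<Sum>i\<le>d. z i * (Es l *\<^sub>v v i) $ k) = (\<Sum>i\<le>d. if i = l then z l * v l $ k else 0)"
    using k l by (intro sum.cong refl) (simp add: Es_v)
  then show "(Es l *\<^sub>v comb z) $ k = (z l \<cdot>\<^sub>v v l) $ k"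
    unfolding mult_mat_comb[OF Es_carrier[OF l]] using k l v_carrier[OF l] by simp
qed (use v_carrier[OF l] Es_carrier[OF l] in simp)

lemma A_comb: "A *\<^sub>v comb z = comb (mat_apply d Y z)"
proof (rule eq_vecI)
  fix k assume "k < dim_vec (comb (mat_apply d Y z))"
  then have k: "k < d+1" by simp
  have "(A *\<^sub>v comb z) $ k = (\<Sum>j\<le>d. \<Sum>i\<le>d. Y i j * z j * v i $ k)"
    unfolding mult_mat_comb[OF A_carrier] using k by (simp add: A_v sum_distrib_left mult_ac)
  also have "\<dots> = (\<Sum>i\<le>d. \<Sum>j\<le>d. Y i j * z j * v i $ k)"
    by (rule sum.swap)
  finally show "(A *\<^sub>v comb z) $ k = comb (mat_apply d Y z) $ k"
    unfolding mat_apply_def using k by (simp add: sum_distrib_right)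
qed (use A_carrier in simp)


lemma Es_A_comb: "i \<le> d \<Longrightarrow> (Es i * A) *\<^sub>v comb z = mat_apply d Y z i \<cdot>\<^sub>v v i"
  by (simp add: assoc_mult_mat_vec[OF Es_carrier A_carrier comb_carrier] A_comb Es_comb)

lemma Es_A_Es_comb:
  assumes "i \<le> d" "j \<le> d"
  shows "(Es i * A * Es j) *\<^sub>v comb z = (Y i j * z j) \<cdot>\<^sub>v v i"
proof -
  have "(Es i * A * Es j) *\<^sub>v comb z = (Es i * A) *\<^sub>v (Es j *\<^sub>v comb z)"
    using Es_carrier[OF assms(1)] Es_carrier[OF assms(2)] A_carrier comb_carrier
    by (intro assoc_mult_mat_vec[of _ "d+1" "d+1"]) auto
  also have "Es j *\<^sub>v comb z = comb (\<lambda>l. if l = j then z j else 0)"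
    using assms(2) by (simp add: Es_comb comb_delta)
  finally show ?thesis
    using assms by (simp add: Es_A_comb mat_apply_delta)
qed

lemma Es_A_Es_eq_zero_iff:
  assumes i: "i \<le> d" and j: "j \<le> d"
  shows "Es i * A * Es j = 0\<^sub>m (d+1) (d+1) \<longleftrightarrow> Y i j = 0"
proof
  assume zero: "Es i * A * Es j = 0\<^sub>m (d+1) (d+1)"
  obtain k0 where k0: "k0 < d+1" "v i $ k0 \<noteq> 0" using v_nz[OF i] by blast
  have "((Es i * A * Es j) *\<^sub>v comb (\<lambda>l. 1)) $ k0 = 0"
    unfolding zero using k0 comb_carrier by simp
  then have "Y i j * v i $ k0 = 0"
    unfolding Es_A_Es_comb[OF i j] using k0 v_carrier[OF i] by simp
  with k0 show "Y i j = 0" by simp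
next
  assume Y0: "Y i j = 0"
  have M: "Es i * A * Es j \<in> carrier_mat (d+1) (d+1)"
    using Es_carrier[OF i] Es_carrier[OF j] A_carrier by simp
  show "Es i * A * Es j = 0\<^sub>m (d+1) (d+1)"
  proof (rule eq_matI)
    fix r c assume rc: "r < dim_row (0\<^sub>m (d+1) (d+1) :: 'a mat)" "c < dim_col (0\<^sub>m (d+1) (d+1) :: 'a mat)"
    obtain z where z: "unit_vec (d+1) c = comb z" using comb_surj[of "unit_vec (d+1) c"] by auto
    have "(Es i * A * Es j) $$ (r,c) = ((Es i * A * Es j) *\<^sub>v unit_vec (d+1) c) $ r"
      using index_mult_mat_vec_unit_vec[OF M] rc by simp
    also have "\<dots> = 0" unfolding z Es_A_Es_comb[OF i j] Y0 using rc v_carrier[OF i] by simp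
    finally show "(Es i * A * Es j) $$ (r,c) = 0\<^sub>m (d+1) (d+1) $$ (r,c)" using rc by simp
  qed (use M in auto)
qed

lemma trace_Es_A: assumes i: "i \<le> d" shows "mat_trace (Es i * A) = Y i i"
proof -
  obtain k0 where k0: "k0 < d+1" "v i $ k0 \<noteq> 0" using v_nz[OF i] by blast
  have range: "\<exists>c. (Es i * A) *\<^sub>v w = c \<cdot>\<^sub>v v i" if "w \<in> carrier_vec (d+1)" for w
    using comb_surj[OF that] Es_A_comb[OF i] by blast
  have "v i = comb (\<lambda>l. if l = i then 1 else 0)"
    using comb_delta[OF i, of 1] v_carrier[OF i] by simp
  then have "(Es i * A) *\<^sub>v v i = Y i i \<cdot>\<^sub>v v i"
    using i by (simp add: Es_A_comb mat_apply_delta)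
  then show ?thesis
    using mat_trace_rank_one[OF _ v_carrier[OF i] k0 range] Es_carrier[OF i] A_carrier by simp
qed

lemma dual_comb_comb: "dual_comb d ths Es *\<^sub>v comb z = comb (\<lambda>i. ths i * z i)"
proof (rule eq_vecI)
  fix k assume "k < dim_vec (comb (\<lambda>i. ths i * z i))"
  then have k: "k < d+1" by simp
  have "(dual_comb d ths Es *\<^sub>v comb z) $ k = (\<Sum>l<d+1. (\<Sum>i\<le>d. ths i * Es i $$ (k,l)) * comb z $ l)"
    using k by (subst index_mult_mat_vec_sum[of _ "d+1" "d+1"]) (auto simp: dual_comb_def intro!: sum.cong)
  also have "\<dots> = (\<Sum>l<d+1. \<Sum>i\<le>d. ths i * (Es i $$ (k,l) * comb z $ l))"
    by (simp only: sum_distrib_right mult.assoc)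
  also have "\<dots> = (\<Sum>i\<le>d. \<Sum>l<d+1. ths i * (Es i $$ (k,l) * comb z $ l))"
    by (rule sum.swap)
  also have "\<dots> = (\<Sum>i\<le>d. ths i * (Es i *\<^sub>v comb z) $ k)"
    by (intro sum.cong refl) (simp add: index_mult_mat_vec_sum[OF Es_carrier comb_carrier k] sum_distrib_left distrib_left)
  also have "\<dots> = (\<Sum>i\<le>d. ths i * (z i * v i $ k))"
    using k by (intro sum.cong refl) (simp add: Es_comb)
  finally show "(dual_comb d ths Es *\<^sub>v comb z) $ k = comb (\<lambda>i. ths i * z i) $ k"
    using k by (simp add: mult_ac)
qed (simp add: dual_comb_def)

end

section \<open>The tail condition\<close>

locale bipartite_tail_setting = coordinate_basis d Es A v Y for d Es A v Y +
  fixes E :: "nat \<Rightarrow> 'a mat" and th ths :: "nat \<Rightarrow> 'a"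
  assumes d3: "3 \<le> d"
    and tridiag0: "\<forall>i\<le>d. \<forall>j\<le>d. (i > j + 1 \<or> j > i + 1) \<longrightarrow> Es i * A * Es j = 0\<^sub>m (d+1) (d+1)"
    and tridiag1: "\<forall>i\<le>d. \<forall>j\<le>d. (i = j + 1 \<or> j = i + 1) \<longrightarrow> Es i * A * Es j \<noteq> 0\<^sub>m (d+1) (d+1)"
    and bip: "bipartite d Es A"
    and th_inj: "inj_on th {0..d}"
    and th_eig: "\<forall>i\<le>d. eigenvalue A (th i)"
    and E_prim: "\<forall>i\<le>d. primitive_idempotent d A (th i) (E i)"
    and ths_inj: "inj_on ths {0..d}"
    and row_sum: "\<forall>i\<le>d. (\<Sum>j\<le>d. Y i j) = th 0"
    and tail: "is_tail d E (dual_comb d ths Es)"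
begin

sublocale bipartite_tridiagonal d Y
proof
  show "Y i j = 0" if "i \<le> d" "j \<le> d" "i > j + 1 \<or> j > i + 1" for i j
    using that tridiag0 Es_A_Es_eq_zero_iff by blast
  show "Y i i = 0" if "i \<le> d" for i
    using that bip trace_Es_A unfolding bipartite_def by simp
  show "Y i (i+1) \<noteq> 0" and "Y (i+1) i \<noteq> 0" if "i < d" for i
  proof -
    have "Es i * A * Es (i+1) \<noteq> 0\<^sub>m (d+1) (d+1)" "Es (i+1) * A * Es i \<noteq> 0\<^sub>m (d+1) (d+1)"
      using tridiag1[rule_format, of i "i+1"] tridiag1[rule_format, of "i+1" i] that by auto
    then show "Y i (i+1) \<noteq> 0" "Y (i+1) i \<noteq> 0" using Es_A_Es_eq_zero_iff that by auto
  qed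
qed

lemma mat_apply_one: "i \<le> d \<Longrightarrow> mat_apply d Y (\<lambda>l. 1) i = th 0"
  using row_sum unfolding mat_apply_def by simp

lemma eigenvector_exists:
  assumes j: "j \<le> d"
  shows "\<exists>z. (\<forall>i\<le>d. mat_apply d Y z i = th j * z i) \<and> (\<exists>i\<le>d. z i \<noteq> 0)"
proof -
  obtain x where x: "x \<in> carrier_vec (d+1)" "x \<noteq> 0\<^sub>v (d+1)" "A *\<^sub>v x = th j \<cdot>\<^sub>v x"
    using th_eig j A_carrier unfolding eigenvalue_def eigenvector_def by auto
  obtain z where z: "x = comb z" using comb_surj[OF x(1)] by blast
  have "comb (mat_apply d Y z) = comb (\<lambda>i. th j * z i)"
    using x(3) unfolding z A_comb smult_comb .
  then have "\<forall>i\<le>d. mat_apply d Y z i = th j * z i" using comb_inj by blast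
  moreover have "\<exists>i\<le>d. z i \<noteq> 0"
  proof (rule ccontr)
    assume "\<not> (\<exists>i\<le>d. z i \<noteq> 0)"
    then have "x = comb (\<lambda>i. 0)" unfolding z by (intro comb_cong) auto
    also have "comb (\<lambda>i. 0) = 0\<^sub>v (d+1)" by (intro eq_vecI) auto
    finally show False using x(2) by simp
  qed
  ultimately show ?thesis by blast
qed

text \<open>Row sums \<open>th 0\<close> make the all-ones vector a \<open>th 0\<close>-eigenvector of \<open>Y\<close>. Taking it as
  \<open>eigvec 0\<close> gives \<open>ths * eigvec 0 = ths\<close>, so the tail condition at \<open>E 0\<close> constrains \<open>ths\<close> itself.\<close>

definition eigvec :: "nat \<Rightarrow> nat \<Rightarrow> 'a" where
  "eigvec j = (if j = 0 then (\<lambda>i. 1)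
     else (SOME z. (\<forall>i\<le>d. mat_apply d Y z i = th j * z i) \<and> (\<exists>i\<le>d. z i \<noteq> 0)))"

lemma eigvec_0: "eigvec 0 = (\<lambda>i. 1)"
  unfolding eigvec_def by simp

lemma eigvec_eigen:
  assumes j: "j \<le> d"
  shows "(\<forall>i\<le>d. mat_apply d Y (eigvec j) i = th j * eigvec j i) \<and> (\<exists>i\<le>d. eigvec j i \<noteq> 0)"
proof (cases "j = 0")
  case True
  then show ?thesis using mat_apply_one by (auto simp: eigvec_0)
next
  case False
  then show ?thesis unfolding eigvec_def using someI_ex[OF eigenvector_exists[OF j]] by simp
qed

sublocale tridiagonal_eigenbasis d Y th eigvec
  by unfold_locales (use eigvec_eigen th_inj in \<open>auto simp: atLeast0AtMost\<close>)

lemma E_carrier: "l \<le> d \<Longrightarrow> E l \<in> carrier_mat (d+1) (d+1)"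
  using E_prim unfolding primitive_idempotent_def by auto

lemma A_comb_eigvec: "j \<le> d \<Longrightarrow> A *\<^sub>v comb (eigvec j) = th j \<cdot>\<^sub>v comb (eigvec j)"
  unfolding A_comb smult_comb by (intro comb_cong) (simp add: eigen)

lemma comb_eigvec_nz: "j \<le> d \<Longrightarrow> comb (eigvec j) \<noteq> 0\<^sub>v (d+1)"
  using eigenvector_nz comb_eq_zero by blast

lemma E_comb_eigvec:
  assumes l: "l \<le> d" and j: "j \<le> d"
  shows "E l *\<^sub>v comb (eigvec j) = (if l = j then comb (eigvec j) else 0\<^sub>v (d+1))"
proof (cases "l = j")
  case True
  then show ?thesis
    using E_prim j A_comb_eigvec[OF j] unfolding primitive_idempotent_def by auto
next
  case False
  then have "th j \<noteq> th l" using th_inj l j by (auto simp: atLeast0AtMost dest: inj_onD)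
  then show ?thesis
    using False E_prim l A_comb_eigvec[OF j] unfolding primitive_idempotent_def by auto
qed

lemma E_inj: assumes "a \<le> d" "b \<le> d" "a \<noteq> b" shows "E a \<noteq> E b"
proof
  assume "E a = E b"
  then have "E a *\<^sub>v comb (eigvec a) = E b *\<^sub>v comb (eigvec a)" by simp
  then show False
    using E_comb_eigvec[OF assms(1,1)] E_comb_eigvec[OF assms(2,1)] assms(3) comb_eigvec_nz[OF assms(1)]
    by simp
qed

lemma E_comb_eq_zero:
  assumes l: "l \<le> d" and y: "\<forall>i\<le>d. y i = (\<Sum>j\<le>d. a j * eigvec j i)"
    and zero: "E l *\<^sub>v comb y = 0\<^sub>v (d+1)"
  shows "a l = 0"
proof -
  have "comb y = comb (\<lambda>i. \<Sum>j\<le>d. a j * eigvec j i)" using y by (intro comb_cong) auto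
  then have "E l *\<^sub>v comb y = vec (d+1) (\<lambda>k. \<Sum>j\<le>d. a j * (E l *\<^sub>v comb (eigvec j)) $ k)"
    using mult_mat_comb_sum[OF E_carrier[OF l]] by simp
  also have "\<dots> = a l \<cdot>\<^sub>v comb (eigvec l)"
  proof (rule eq_vecI)
    fix k assume "k < dim_vec (a l \<cdot>\<^sub>v comb (eigvec l))"
    then have k: "k < d+1" by simp
    have "(\<Sum>j\<le>d. a j * (E l *\<^sub>v comb (eigvec j)) $ k) = (\<Sum>j\<le>d. if j = l then a l * comb (eigvec l) $ k else 0)"
      using E_comb_eigvec[OF l] k by (intro sum.cong refl) auto
    then show "vec (d+1) (\<lambda>k. \<Sum>j\<le>d. a j * (E l *\<^sub>v comb (eigvec j)) $ k) $ k = (a l \<cdot>\<^sub>v comb (eigvec l)) $ k"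
      using k l by simp
  qed simp
  finally have "comb (\<lambda>i. a l * eigvec l i) = 0\<^sub>v (d+1)" using zero by (simp add: smult_comb)
  moreover obtain i where "i \<le> d" "eigvec l i \<noteq> 0" using eigenvector_nz[OF l] by blast
  ultimately show "a l = 0" using comb_eq_zero by fastforce
qed

abbreviation As where "As \<equiv> dual_comb d ths Es"

lemma sym_form_dual_vanishes:
  assumes l: "l \<le> d" and j: "j \<le> d" and zero: "E l * As * E j = 0\<^sub>m (d+1) (d+1)"
  shows "sym_form d Y (\<lambda>i. ths i * eigvec j i) (eigvec l) = 0"
proof -
  obtain a where a: "\<forall>i\<le>d. ths i * eigvec j i = (\<Sum>r\<le>d. a r * eigvec r i)"
    using eigenvectors_span[of "\<lambda>i. ths i * eigvec j i"] by (elim exE)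
  have As: "As \<in> carrier_mat (d+1) (d+1)" unfolding dual_comb_def by simp
  have "(E l * As * E j) *\<^sub>v comb (eigvec j) = (E l * As) *\<^sub>v (E j *\<^sub>v comb (eigvec j))"
    by (rule assoc_mult_mat_vec[of _ "d+1" "d+1"]) (use E_carrier[OF l] E_carrier[OF j] As comb_carrier in auto)
  also have "\<dots> = E l *\<^sub>v (As *\<^sub>v (E j *\<^sub>v comb (eigvec j)))"
    by (rule assoc_mult_mat_vec[of _ "d+1" "d+1"]) (use E_carrier[OF l] E_carrier[OF j] As comb_carrier in auto)
  also have "\<dots> = E l *\<^sub>v comb (\<lambda>i. ths i * eigvec j i)"
    by (simp add: E_comb_eigvec[OF j j] dual_comb_comb)
  finally have "E l *\<^sub>v comb (\<lambda>i. ths i * eigvec j i) = 0\<^sub>v (d+1)"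
    unfolding zero using zero_mult_mat_vec[OF comb_carrier] by simp
  from E_comb_eq_zero[OF l a this] have "a l = 0" .
  with sym_form_eigen_coeff[of _ a, OF _ l] a show ?thesis by simp
qed


lemma E0_As_E_eq_zero:
  assumes "2 \<le> j" "j \<le> d"
  shows "E 0 * As * E j = 0\<^sub>m (d+1) (d+1)"
proof -
  have "E j \<noteq> E 1" "E 0 \<noteq> E j" using E_inj assms by auto
  then show ?thesis using tail assms unfolding is_tail_def Delta_adj_def by auto
qed

lemma E1_As_E_eq_zero_except:
  obtains m where "2 \<le> m" "m \<le> d"
    and "\<And>j. 2 \<le> j \<Longrightarrow> j \<le> d \<Longrightarrow> j \<noteq> m \<Longrightarrow> E 1 * As * E j = 0\<^sub>m (d+1) (d+1)"
proof (cases "\<exists>m. 2 \<le> m \<and> m \<le> d \<and> E 1 * As * E m \<noteq> 0\<^sub>m (d+1) (d+1)")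
  case False
  then show ?thesis using that[of 2] d3 by auto
next
  case True
  then obtain m where m: "2 \<le> m" "m \<le> d" "E 1 * As * E m \<noteq> 0\<^sub>m (d+1) (d+1)" by blast
  define S where "S = {E j |j. j \<le> d \<and> E j \<noteq> E 0 \<and> Delta_adj d E As 1 j}"
  have card_S: "card S \<le> 1" using tail unfolding is_tail_def S_def by blast
  have "finite S" unfolding S_def by (rule finite_subset[of _ "E ` {..d}"]) auto
  have in_S: "E j \<in> S" if "2 \<le> j" "j \<le> d" "E 1 * As * E j \<noteq> 0\<^sub>m (d+1) (d+1)" for j
    using E_inj[of j 0] E_inj[of 1 j] that d3 unfolding S_def Delta_adj_def by auto
  have "E 1 * As * E j = 0\<^sub>m (d+1) (d+1)" if j: "2 \<le> j" "j \<le> d" "j \<noteq> m" for j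
  proof (rule ccontr)
    assume "E 1 * As * E j \<noteq> 0\<^sub>m (d+1) (d+1)"
    then have "{E j, E m} \<subseteq> S" using in_S j m by auto
    with \<open>finite S\<close> have "card {E j, E m} \<le> card S" by (rule card_mono)
    with card_S E_inj[of j m] j m show False by simp
  qed
  with m that show ?thesis by blast
qed

text \<open>The tail condition, read through the form \<open>sym_form\<close> for which the \<open>E\<close>'s are
  self-adjoint, bounds the eigenvector expansions of \<open>ths\<close> and \<open>ths * eigvec 1\<close>.\<close>

lemma ths_expansion: obtains a0 a1 where "\<And>i. i \<le> d \<Longrightarrow> ths i = a0 + a1 * eigvec 1 i"
proof -
  obtain a where a: "\<forall>i\<le>d. ths i = (\<Sum>r\<le>d. a r * eigvec r i)"
    using eigenvectors_span[of ths] by (elim exE)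
  have "a j = 0" if j: "2 \<le> j" "j \<le> d" for j
  proof (rule eigen_coeff_eq_zero[of ths a])
    have "sym_form d Y ths (eigvec j) = sym_form d Y (\<lambda>i. ths i * eigvec j i) (eigvec 0)"
      unfolding sym_form_def eigvec_0 by (simp add: mult_ac)
    then show "sym_form d Y ths (eigvec j) = 0"
      using sym_form_dual_vanishes[OF _ j(2) E0_As_E_eq_zero[OF j]] by simp
  qed (use a j in auto)
  then have "ths i = a 0 + a 1 * eigvec 1 i" if "i \<le> d" for i
    using a that d3 sum.mono_neutral_right[of "{..d}" "{0,1}" "\<lambda>r. a r * eigvec r i"]
    by (simp add: eigvec_0)
  with that show ?thesis by blast
qed

lemma ths_eigvec1_expansion:
  obtains m b0 b1 bm where "2 \<le> m" "m \<le> d"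
    and "\<And>i. i \<le> d \<Longrightarrow> ths i * eigvec 1 i = b0 + b1 * eigvec 1 i + bm * eigvec m i"
proof -
  obtain m where m: "2 \<le> m" "m \<le> d"
    and zero: "\<And>j. 2 \<le> j \<Longrightarrow> j \<le> d \<Longrightarrow> j \<noteq> m \<Longrightarrow> E 1 * As * E j = 0\<^sub>m (d+1) (d+1)"
    using E1_As_E_eq_zero_except by blast
  obtain b where b: "\<forall>i\<le>d. ths i * eigvec 1 i = (\<Sum>r\<le>d. b r * eigvec r i)"
    using eigenvectors_span[of "\<lambda>i. ths i * eigvec 1 i"] by (elim exE)
  have "b j = 0" if j: "2 \<le> j" "j \<le> d" "j \<noteq> m" for j
  proof (rule eigen_coeff_eq_zero[of "\<lambda>i. ths i * eigvec 1 i" b])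
    have "sym_form d Y (\<lambda>i. ths i * eigvec 1 i) (eigvec j) = sym_form d Y (\<lambda>i. ths i * eigvec j i) (eigvec 1)"
      unfolding sym_form_def by (simp add: mult_ac)
    then show "sym_form d Y (\<lambda>i. ths i * eigvec 1 i) (eigvec j) = 0"
      using sym_form_dual_vanishes[OF _ j(2) zero[OF j]] d3 by simp
  qed (use b j in auto)
  then have "ths i * eigvec 1 i = b 0 + b 1 * eigvec 1 i + b m * eigvec m i" if "i \<le> d" for i
    using b that m sum.mono_neutral_right[of "{..d}" "{0,1,m}" "\<lambda>r. b r * eigvec r i"]
    by (simp add: eigvec_0 add_ac)
  with m that show ?thesis by blast
qed

lemma shifted_ths_relations:
  obtains a \<tau> \<eta> \<mu> where
    "\<And>i. i \<le> d \<Longrightarrow> mat_apply d Y (\<lambda>l. ths l - a) i = th 1 * (ths i - a)"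
    "\<And>i. i \<le> d \<Longrightarrow> mat_apply d Y (\<lambda>l. (ths l - a)^2) i = \<tau> * (ths i - a)^2 + \<eta> * (ths i - a) + \<mu>"
proof -
  obtain a0 a1 where a: "\<And>i. i \<le> d \<Longrightarrow> ths i = a0 + a1 * eigvec 1 i"
    using ths_expansion by blast
  obtain m b0 b1 bm where m: "2 \<le> m" "m \<le> d"
    and b: "\<And>i. i \<le> d \<Longrightarrow> ths i * eigvec 1 i = b0 + b1 * eigvec 1 i + bm * eigvec m i"
    using ths_eigvec1_expansion by blast
  define t where "t i = ths i - a0" for i
  have t: "t i = 0 + a1 * eigvec 1 i + 0 * eigvec 1 i" if "i \<le> d" for i
    using a[OF that] unfolding t_def by simp
  have t_sq: "t i^2 = a1 * b0 + (a1 * b1 - a0 * a1) * eigvec 1 i + (a1 * bm) * eigvec m i"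
    if "i \<le> d" for i
  proof -
    have "t i^2 = a1 * (ths i * eigvec 1 i) - a0 * (a1 * eigvec 1 i)"
      using a[OF that] unfolding t_def by (simp add: algebra_simps power2_eq_square)
    then show ?thesis using b[OF that] by (simp add: algebra_simps)
  qed
  have "mat_apply d Y t i = th 1 * t i" if i: "i \<le> d" for i
  proof -
    have "mat_apply d Y t i = mat_apply d Y (\<lambda>l. 0 + a1 * eigvec 1 l + 0 * eigvec 1 l) i"
      using t by (rule mat_apply_cong)
    then show ?thesis unfolding mat_apply_affine using i d3 t[OF i] by (simp add: eigen)
  qed
  moreover have "mat_apply d Y (\<lambda>l. t l^2) i
      = th m * t i^2 + ((b1 - a0) * (th 1 - th m)) * t i + a1 * b0 * (th 0 - th m)" if i: "i \<le> d" for i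
  proof -
    have "mat_apply d Y (\<lambda>l. t l^2) i
        = mat_apply d Y (\<lambda>l. a1 * b0 + (a1 * b1 - a0 * a1) * eigvec 1 l + (a1 * bm) * eigvec m l) i"
      using t_sq by (rule mat_apply_cong)
    also have "\<dots> = a1 * b0 * th 0 + (a1 * b1 - a0 * a1) * (th 1 * eigvec 1 i) + (a1 * bm) * (th m * eigvec m i)"
      unfolding mat_apply_affine using i d3 m by (simp add: mat_apply_one eigen)
    also have "\<dots> = th m * t i^2 + ((b1 - a0) * (th 1 - th m)) * t i + a1 * b0 * (th 0 - th m)"
      unfolding t_sq[OF i] using t[OF i] by (simp add: algebra_simps)
    finally show ?thesis .
  qed
  ultimately show ?thesis using that unfolding t_def by blast
qed

lemma dual_eigenvalue_ratio_const:
  "\<exists>c. \<forall>j. 3 \<le> j \<and> j \<le> d \<longrightarrow> (ths j - ths (j-3)) / (ths (j-1) - ths (j-2)) = c"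
proof -
  obtain a \<tau> \<eta> \<mu> where
    lin: "\<And>i. i \<le> d \<Longrightarrow> mat_apply d Y (\<lambda>l. ths l - a) i = th 1 * (ths i - a)" and
    sq: "\<And>i. i \<le> d \<Longrightarrow> mat_apply d Y (\<lambda>l. (ths l - a)^2) i = \<tau> * (ths i - a)^2 + \<eta> * (ths i - a) + \<mu>"
    using shifted_ths_relations by blast
  define t where "t i = ths i - a" for i
  have inj: "inj_on t {0..d}" using ths_inj unfolding t_def inj_on_def by simp
  obtain \<beta> \<gamma> where rec: "\<And>j. 1 \<le> j \<Longrightarrow> j < d \<Longrightarrow> t (j-1) + t (j+1) = \<beta> * t j + \<gamma>"
  proof -
    have "\<exists>\<beta> \<gamma>. \<forall>j. 1 \<le> j \<longrightarrow> j < d \<longrightarrow> t (j-1) + t (j+1) = \<beta> * t j + \<gamma>"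
    proof (rule affine_recurrence_of_row_relations[where c = "\<lambda>j. Y j (j-1)" and b = "\<lambda>j. Y j (j+1)"])
      fix j assume j: "j < d"
      show "Y j (j-1) + Y j (j+1) = th 0"
        using mat_apply_row[OF j, of "\<lambda>l. 1"] mat_apply_one j by simp
      show "Y j (j-1) * t (j-1) + Y j (j+1) * t (j+1) = th 1 * t j"
        using mat_apply_row[OF j, of t] lin[of j] j unfolding t_def by simp
      show "Y j (j-1) * t (j-1)^2 + Y j (j+1) * t (j+1)^2 = \<tau> * t j^2 + \<eta> * t j + \<mu>"
        using mat_apply_row[OF j, of "\<lambda>l. t l^2"] sq[of j] j unfolding t_def by simp
      show "Y j (j+1) \<noteq> 0" using entry_above_nz[OF j] .
    qed (use d3 inj entry_diag in \<open>auto simp: atLeast0AtMost\<close>)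
    with that show ?thesis by blast
  qed
  have "(ths j - ths (j-3)) / (ths (j-1) - ths (j-2)) = \<beta> + 1" if "3 \<le> j" "j \<le> d" for j
    using ratio_const_of_affine_recurrence[OF rec inj that] unfolding t_def by simp
  then show ?thesis by blast
qed

end

theorem proposition9p4:
  fixes d :: nat
    and Es E :: "nat \<Rightarrow> 'a::field mat"
    and A :: "'a mat"
    and th ths :: "nat \<Rightarrow> 'a"
  assumes d3: "d \<ge> 3"
    and sys: "orth_idem_system d Es"
    and A_carrier: "A \<in> carrier_mat (d+1) (d+1)"
    and tridiag0: "\<forall>i\<le>d. \<forall>j\<le>d. (i > j + 1 \<or> j > i + 1) \<longrightarrow> Es i * A * Es j = 0\<^sub>m (d+1) (d+1)"
    and tridiag1: "\<forall>i\<le>d. \<forall>j\<le>d. (i = j + 1 \<or> j = i + 1) \<longrightarrow> Es i * A * Es j \<noteq> 0\<^sub>m (d+1) (d+1)"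
    and mfree: "multiplicity_free d A"
    and bip: "bipartite d Es A"
    and th_inj: "inj_on th {0..d}"
    and th_eig: "\<forall>i\<le>d. eigenvalue A (th i)"
    and E_prim: "\<forall>i\<le>d. primitive_idempotent d A (th i) (E i)"
    and ths_inj: "inj_on ths {0..d}"
    and norm: "normalizing d Es A (th 0)"
    and tail: "is_tail d E (dual_comb d ths Es)"
  shows "\<exists>c. \<forall>j. 3 \<le> j \<and> j \<le> d \<longrightarrow>
           (ths j - ths (j-3)) / (ths (j-1) - ths (j-2)) = c"
proof -
  obtain v :: "nat \<Rightarrow> 'a vec" and Y where
    v: "\<forall>i\<le>d. v i \<in> carrier_vec (d+1) \<and> (\<exists>w \<in> carrier_vec (d+1). v i = Es i *\<^sub>v w)"
    and indep: "\<forall>c. (\<forall>k<d+1. (\<Sum>i\<le>d. c i * v i $ k) = 0) \<longrightarrow> (\<forall>i\<le>d. c i = 0)"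
    and span: "\<forall>w \<in> carrier_vec (d+1). \<exists>c. \<forall>k<d+1. w $ k = (\<Sum>i\<le>d. c i * v i $ k)"
    and Y: "\<forall>j\<le>d. \<forall>k<d+1. (A *\<^sub>v v j) $ k = (\<Sum>i\<le>d. Y i j * v i $ k)"
    and row_sum: "\<forall>i\<le>d. (\<Sum>j\<le>d. Y i j) = th 0"
    using norm unfolding normalizing_def by blast
  interpret bipartite_tail_setting d Es A v Y E th ths
  proof
    show "\<And>i. i \<le> d \<Longrightarrow> Es i \<in> carrier_mat (d+1) (d+1)"
      and "\<And>i j. i \<le> d \<Longrightarrow> j \<le> d \<Longrightarrow> Es i * Es j = (if i = j then Es i else 0\<^sub>m (d+1) (d+1))"
      using sys unfolding orth_idem_system_def by auto
    show "\<And>i. i \<le> d \<Longrightarrow> v i \<in> carrier_vec (d+1)"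
      and "\<And>i. i \<le> d \<Longrightarrow> \<exists>w\<in>carrier_vec (d+1). v i = Es i *\<^sub>v w"
      using v by blast+
  qed (use A_carrier indep span Y d3 tridiag0 tridiag1 bip th_inj th_eig E_prim ths_inj row_sum tail in blast)+
  show ?thesis by (rule dual_eigenvalue_ratio_const)
qed

end
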